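(* For all $n\ge1$, $p_{0,n}<\phi$, where $\phi=(1+\sqrt5)/2$.
   Context: $\Phi$ is the partial map of $\mathbb{R}^2$ defined for $p\ne0$ by $\Phi(p,u)=\bigl(p^2(u+1)-1,\ 1/p\bigr)$. For $n\ge1$, the trajectory $T_n$ is the (existing and unique) finite sequence $(p_{j,n},u_{j,n})$, $j=0,\dots,n$, with $(p_{j,n},u_{j,n})=\Phi(p_{j-1,n},u_{j-1,n})$ for $1\le j\le n$, $u_{0,n}=0$, $p_{n,n}=0$, and $p_{j,n}>0$ for $0\le j\le n-1$. *)

theory Defs
  imports Complex_Main
begin

definition Phi :: "real \<times> real \<Rightarrow> real \<times> real" where
  "Phi pu = (fst pu ^ 2 * (snd pu + 1) - 1, 1 / fst pu)"

text \<open>A trajectory T_n: a finite sequence (p_j,u_j), j=0..n, given as a function on nat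
  (only indices 0..n are relevant), with u_0 = 0, p_n = 0, p_j > 0 for j < n, and
  (p_j,u_j) = Phi(p_{j-1},u_{j-1}) for 1 <= j <= n (Phi is applied only where p_{j-1} > 0).\<close>
definition is_trajectory :: "nat \<Rightarrow> (nat \<Rightarrow> real \<times> real) \<Rightarrow> bool" where
  "is_trajectory n T \<longleftrightarrow>
     snd (T 0) = 0 \<and> fst (T n) = 0 \<and>
     (\<forall>j<n. fst (T j) > 0) \<and>
     (\<forall>j. 1 \<le> j \<and> j \<le> n \<longrightarrow> T j = Phi (T (j - 1)))"

text \<open>The trajectory T_n (restricted to indices 0..n), assumed in the paper to exist uniquely.\<close>
definition traj :: "nat \<Rightarrow> nat \<Rightarrow> real \<times> real" where
  "traj n = (THE T. is_trajectory n T \<and> (\<forall>j>n. T j = (0, 0)))"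

definition p_traj :: "nat \<Rightarrow> nat \<Rightarrow> real" where
  "p_traj j n = fst (traj n j)"

definition golden :: real where
  "golden = (1 + sqrt 5) / 2"

end

theory Submission
  imports Defs
begin

text \<open>A trajectory is the \<open>Phi\<close>-orbit of \<open>(p\<^sub>0, 0)\<close>. If \<open>p \<ge> golden\<close> and \<open>u \<ge> 0\<close>, then
  \<open>p\<^sup>2 (u + 1) - 1 \<ge> p\<^sup>2 - 1 \<ge> p\<close> and \<open>1 / p > 0\<close>, so an orbit starting at \<open>p\<^sub>0 \<ge> golden\<close> stays
  above \<open>golden\<close> and never reaches 0. Because \<open>traj\<close> is a definite description, \<open>T\<^sub>n\<close> must
  also be shown to exist uniquely. While an orbit stays positive, \<open>p\<^sub>j\<close> and \<open>p\<^sub>j (u\<^sub>j + 1)\<close> are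
  strictly increasing in the starting point, which gives uniqueness; existence follows by
  induction on \<open>n\<close>, applying the intermediate value theorem to \<open>p\<^sub>n\<^sub>+\<^sub>1\<close> between the starting
  point of \<open>T\<^sub>n\<close> and \<open>golden\<close>.\<close>

definition orbit :: "real \<Rightarrow> nat \<Rightarrow> real \<times> real" where
  "orbit x j = (Phi ^^ j) (x, 0)"

definition orbit_p :: "real \<Rightarrow> nat \<Rightarrow> real" where
  "orbit_p x j = fst (orbit x j)"

definition orbit_u :: "real \<Rightarrow> nat \<Rightarrow> real" where
  "orbit_u x j = snd (orbit x j)"

lemma orbit_0: "orbit x 0 = (x, 0)"
  and orbit_Suc: "orbit x (Suc j) = Phi (orbit x j)"
  by (simp_all add: orbit_def)

lemma orbit_p_0 [simp]: "orbit_p x 0 = x"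
  and orbit_u_0 [simp]: "orbit_u x 0 = 0"
  by (simp_all add: orbit_p_def orbit_u_def orbit_0)

lemma orbit_p_Suc: "orbit_p x (Suc j) = orbit_p x j ^ 2 * (orbit_u x j + 1) - 1"
  and orbit_u_Suc: "orbit_u x (Suc j) = 1 / orbit_p x j"
  by (simp_all add: orbit_p_def orbit_u_def orbit_Suc Phi_def)

lemma orbit_u_nonneg:
  assumes "\<forall>i<j. 0 < orbit_p x i"
  shows "0 \<le> orbit_u x j"
  using assms by (cases j) (auto simp: orbit_u_Suc)

lemma orbit_strict_mono:
  assumes "x < y" "\<forall>i<j. 0 < orbit_p x i"
  shows "orbit_p x j < orbit_p y j \<and>
         orbit_p x j * (orbit_u x j + 1) < orbit_p y j * (orbit_u y j + 1)"
  using assms(2)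
proof (induction j)
  case 0
  then show ?case using assms(1) by simp
next
  case (Suc j)
  let ?q = "\<lambda>z. orbit_p z j * (orbit_u z j + 1)"
  have p_less: "orbit_p x j < orbit_p y j" and q_less: "?q x < ?q y"
    and px: "0 < orbit_p x j"
    using Suc by auto
  have py: "0 < orbit_p y j" using p_less px by linarith
  have qx: "0 < ?q x" using px orbit_u_nonneg[of j x] Suc.prems by simp
  have "orbit_p x j * ?q x < orbit_p y j * ?q y"
    using mult_strict_mono[OF p_less q_less py] qx by simp
  then have p_Suc_less: "orbit_p x (Suc j) < orbit_p y (Suc j)"
    by (simp add: orbit_p_Suc power2_eq_square algebra_simps)
  have "1 / orbit_p y j < 1 / orbit_p x j"
    using px p_less by (simp add: frac_less2)
  moreover have q_Suc: "orbit_p z (Suc j) * (orbit_u z (Suc j) + 1)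
                   = orbit_p z (Suc j) + ?q z - 1 / orbit_p z j" if "0 < orbit_p z j" for z
    using that by (simp add: orbit_p_Suc orbit_u_Suc field_simps power2_eq_square)
  ultimately show ?case
    using p_Suc_less q_less q_Suc[OF px] q_Suc[OF py] by linarith
qed

lemma golden_sq: "golden ^ 2 = golden + 1"
  by (simp add: golden_def power2_eq_square field_simps)

lemma golden_gt_1: "1 < golden"
  by (simp add: golden_def)

lemma orbit_ge_golden:
  assumes "golden \<le> x"
  shows "golden \<le> orbit_p x j \<and> 0 \<le> orbit_u x j"
proof (induction j)
  case 0
  then show ?case using assms by simp
next
  case (Suc j)
  let ?p = "orbit_p x j"
  have "0 \<le> (?p - golden) * (?p + golden - 1)"
    using Suc golden_gt_1 by simp
  then have "?p \<le> ?p ^ 2 - 1"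
    using golden_sq by (simp add: algebra_simps power2_eq_square)
  also have "\<dots> \<le> orbit_p x (Suc j)"
    using Suc mult_left_mono[of 1 "orbit_u x j + 1" "?p ^ 2"] by (simp add: orbit_p_Suc)
  finally show ?case
    using Suc golden_gt_1 by (simp add: orbit_u_Suc)
qed

lemma continuous_on_orbit:
  assumes "\<forall>x\<in>S. \<forall>i<j. orbit_p x i \<noteq> 0"
  shows "continuous_on S (\<lambda>x. orbit_p x j) \<and> continuous_on S (\<lambda>x. orbit_u x j)"
  using assms
proof (induction j)
  case 0
  then show ?case by simp
next
  case (Suc j)
  then show ?case
    unfolding orbit_p_Suc orbit_u_Suc by (auto intro!: continuous_intros)
qed

definition hits_zero :: "nat \<Rightarrow> real \<Rightarrow> bool" where
  "hits_zero n x \<longleftrightarrow> (\<forall>i<n. 0 < orbit_p x i) \<and> orbit_p x n = 0"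

lemma hits_zero_less_golden:
  assumes "hits_zero n x"
  shows "x < golden"
  using assms orbit_ge_golden[of x n] golden_gt_1
  unfolding hits_zero_def by force

lemma orbit_p_pos_above_hits_zero:
  assumes "hits_zero n r" "r < x" "i \<le> n"
  shows "0 < orbit_p x i"
proof -
  have "0 \<le> orbit_p r i"
    using assms(1,3) unfolding hits_zero_def by (metis le_less order.strict_implies_order)
  also have "orbit_p r i < orbit_p x i"
    using orbit_strict_mono[of r x i] assms unfolding hits_zero_def by auto
  finally show ?thesis .
qed

lemma hits_zero_unique:
  assumes "hits_zero n x" "hits_zero n y"
  shows "x = y"
proof -
  have "\<not> (z < w \<and> hits_zero n z \<and> hits_zero n w)" for z w
    using orbit_p_pos_above_hits_zero[of n z w n] by (auto simp: hits_zero_def)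
  then show ?thesis
    using assms by (metis linorder_neqE_linordered_idom)
qed

lemma hits_zero_exists:
  assumes "1 \<le> n"
  shows "\<exists>x. hits_zero n x"
  using assms
proof (induction n rule: nat_induct_at_least)
  case base
  show ?case by (rule exI[of _ 1]) (simp add: hits_zero_def orbit_p_Suc)
next
  case (Suc n)
  then obtain r where r: "hits_zero n r" by blast
  define g where "g x = orbit_p x (Suc n)" for x
  have "g r = -1" using r by (simp add: g_def orbit_p_Suc hits_zero_def)
  moreover have "golden \<le> g golden" using orbit_ge_golden by (simp add: g_def)
  moreover have "r < golden" using r by (rule hits_zero_less_golden)
  moreover have "continuous_on {r..golden} g"
  proof -
    have "\<forall>x\<in>{r..golden}. \<forall>i<n. orbit_p x i \<noteq> 0"
      using r orbit_p_pos_above_hits_zero[OF r]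
      by (force simp: hits_zero_def le_less)
    from continuous_on_orbit[OF this] show ?thesis
      unfolding g_def orbit_p_Suc by (auto intro!: continuous_intros)
  qed
  ultimately obtain c where "r \<le> c" "g c = 0"
    using IVT'[of g r 0 golden] golden_gt_1 by force
  moreover from this have "r < c" using \<open>g r = -1\<close> by (cases "r = c") auto
  ultimately have "hits_zero (Suc n) c"
    using orbit_p_pos_above_hits_zero[OF r]
    by (auto simp: hits_zero_def g_def less_Suc_eq_le)
  then show ?case by blast
qed

lemma is_trajectory_orbit:
  assumes "is_trajectory n T" "j \<le> n"
  shows "T j = orbit (fst (T 0)) j"
  using assms(2)
proof (induction j)
  case 0
  then show ?case using assms(1) by (simp add: is_trajectory_def orbit_0 prod_eq_iff)
next
  case (Suc j)
  then have "T (Suc j) = Phi (T j)"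
    using assms(1) unfolding is_trajectory_def by (metis diff_Suc_1 le_add1 plus_1_eq_Suc)
  then show ?case using Suc by (simp add: orbit_Suc)
qed

lemma is_trajectory_iff:
  "is_trajectory n T \<longleftrightarrow> (\<exists>x. hits_zero n x \<and> (\<forall>j\<le>n. T j = orbit x j))"
proof
  assume T: "is_trajectory n T"
  define x where "x = fst (T 0)"
  have orbit: "\<forall>j\<le>n. T j = orbit x j"
    using is_trajectory_orbit[OF T] unfolding x_def by blast
  then have "hits_zero n x"
    using T by (auto simp: hits_zero_def is_trajectory_def orbit_p_def)
  with orbit show "\<exists>x. hits_zero n x \<and> (\<forall>j\<le>n. T j = orbit x j)" by blast
next
  assume "\<exists>x. hits_zero n x \<and> (\<forall>j\<le>n. T j = orbit x j)"
  then obtain x where hits: "hits_zero n x" and T: "\<And>j. j \<le> n \<Longrightarrow> T j = orbit x j"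
    by blast
  have "T j = Phi (T (j - 1))" if j: "1 \<le> j" "j \<le> n" for j
  proof -
    obtain k where "j = Suc k" using j(1) by (cases j) auto
    then show ?thesis using j(2) T[of j] T[of k] by (simp add: orbit_Suc)
  qed
  moreover have "snd (T 0) = 0" using T[of 0] by (simp add: orbit_0)
  moreover have "fst (T n) = 0" "\<forall>j<n. 0 < fst (T j)"
    using hits T by (auto simp: hits_zero_def orbit_p_def)
  ultimately show "is_trajectory n T"
    unfolding is_trajectory_def by blast
qed

lemma trajectory_ex1:
  assumes "1 \<le> n"
  shows "\<exists>!T. is_trajectory n T \<and> (\<forall>j>n. T j = (0, 0))"
proof -
  obtain x where x: "hits_zero n x" using hits_zero_exists[OF assms] by blast
  define T where "T j = (if j \<le> n then orbit x j else (0, 0))" for j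
  have "is_trajectory n T \<and> (\<forall>j>n. T j = (0, 0))"
    using x by (auto simp: is_trajectory_iff T_def)
  moreover have "T' = T" if traj: "is_trajectory n T'" and zero: "\<forall>j>n. T' j = (0, 0)" for T'
  proof
    fix j
    obtain y where "hits_zero n y" and orbit: "\<forall>j\<le>n. T' j = orbit y j"
      using traj unfolding is_trajectory_iff by blast
    then have "y = x" using x hits_zero_unique by blast
    then show "T' j = T j"
      using orbit zero by (simp add: T_def not_le)
  qed
  ultimately show ?thesis by (intro ex1I[of _ T]) blast+
qed

theorem lemma6:
  fixes n :: nat
  assumes "n \<ge> 1"
  shows "p_traj 0 n < golden"
proof -
  have "is_trajectory n (traj n)"
    using theI'[OF trajectory_ex1[OF assms]] unfolding traj_def by blast
  then obtain x where "hits_zero n x" and "traj n 0 = orbit x 0"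
    by (auto simp: is_trajectory_iff)
  moreover from this have "p_traj 0 n = x" by (simp add: p_traj_def orbit_0)
  ultimately show ?thesis using hits_zero_less_golden by blast
qed

end
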